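(* Let $m,n,u,v\in\mathbb{R}$ with $m+v\neq0$ and $mu-nv=0$, and let $(G_6,g,J)$ be the three-dimensional Lorentzian Lie group described in the context. Write $\mathbb{V}_{RC}$ for the real vector space of left-invariant Ricci collineations $\xi=\lambda_1\overline{e}_1+\lambda_2\overline{e}_2+\lambda_3\overline{e}_3$ ($\lambda_i\in\mathbb{R}$ constants) associated to the Yano connection. Then: (1) if $m=0$ (so $v\neq0$), every left-invariant vector field is a left-invariant Ricci collineation, i.e. $\mathbb{V}_{RC}=\langle\overline{e}_1,\overline{e}_2,\overline{e}_3\rangle$; (2) if $m\neq0$, then $\xi$ is a left-invariant Ricci collineation iff $\lambda_1=0$ and $m\lambda_2+u\lambda_3=0$, so $\mathbb{V}_{RC}=\langle -\frac{u}{m}\overline{e}_2+\overline{e}_3\rangle$.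
   Context: $G_6$ is a connected three-dimensional Lie group whose Lie algebra has a basis $\{\overline{e}_1,\overline{e}_2,\overline{e}_3\}$ (left-invariant vector fields) with $[\overline{e}_1,\overline{e}_2]=m\overline{e}_2+n\overline{e}_3$, $[\overline{e}_1,\overline{e}_3]=u\overline{e}_2+v\overline{e}_3$, $[\overline{e}_2,\overline{e}_3]=0$, where $m+v\neq0$ and $mu-nv=0$. The metric $g$ is the left-invariant Lorentzian metric with $g(\overline{e}_1,\overline{e}_1)=g(\overline{e}_2,\overline{e}_2)=1$, $g(\overline{e}_3,\overline{e}_3)=-1$, $g(\overline{e}_i,\overline{e}_j)=0$ for $i\neq j$. $J$ is the left-invariant product structure with $J\overline{e}_1=\overline{e}_1$, $J\overline{e}_2=\overline{e}_2$, $J\overline{e}_3=-\overline{e}_3$. With $\nabla^{LC}$ the Levi-Civita connection of $g$, the Yano connection is $\nabla^{*}_XY=\nabla^{LC}_XY-\frac12(\nabla^{LC}_YJ)JX-\frac14[(\nabla^{LC}_XJ)JY-(\nabla^{LC}_{JX}J)Y]$; its curvature is $R^{*}(X,Y)Z=\nabla^{*}_X\nabla^{*}_YZ-\nabla^{*}_Y\nabla^{*}_XZ-\nabla^{*}_{[X,Y]}Z$; its Ricci tensor is $\mathrm{Ric}^{*}(X,Y)=-g(R^{*}(X,\overline{e}_1)Y,\overline{e}_1)-g(R^{*}(X,\overline{e}_2)Y,\overline{e}_2)+g(R^{*}(X,\overline{e}_3)Y,\overline{e}_3)$; and $\overline{\mathrm{Ric}^{*}}(X,Y)=\frac12(\mathrm{Ric}^{*}(X,Y)+\mathrm{Ric}^{*}(Y,X))$.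 For a left-invariant vector field $\xi$, $(\mathrm{L}_{\xi}\overline{\mathrm{Ric}^{*}})(X,Y)=\xi(\overline{\mathrm{Ric}^{*}}(X,Y))-\overline{\mathrm{Ric}^{*}}([\xi,X],Y)-\overline{\mathrm{Ric}^{*}}(X,[\xi,Y])$; $\xi$ is a left-invariant Ricci collineation if $\mathrm{L}_{\xi}\overline{\mathrm{Ric}^{*}}=0$. *)

theory Defs
  imports "HOL-Analysis.Analysis"
begin

text \<open>Left-invariant vector fields on the Lie group G6 are identified with the Lie
  algebra, i.e. with coordinate vectors in real^3 with respect to the basis
  e1, e2, e3 (components x$1, x$2, x$3).  All tensors below are evaluated on
  left-invariant fields, so they are constant functions on the group.\<close>

definition ebas :: "3 \<Rightarrow> real^3" where
  "ebas i = axis i 1"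

text \<open>Lie bracket: [e1,e2] = m e2 + n e3, [e1,e3] = u e2 + v e3, [e2,e3] = 0.\<close>
definition brk :: "real \<Rightarrow> real \<Rightarrow> real \<Rightarrow> real \<Rightarrow> real^3 \<Rightarrow> real^3 \<Rightarrow> real^3" where
  "brk m n u v X Y =
     (X$1 * Y$2 - X$2 * Y$1) *\<^sub>R (m *\<^sub>R ebas 2 + n *\<^sub>R ebas 3)
   + (X$1 * Y$3 - X$3 * Y$1) *\<^sub>R (u *\<^sub>R ebas 2 + v *\<^sub>R ebas 3)"

definition gL :: "real^3 \<Rightarrow> real^3 \<Rightarrow> real" where
  "gL X Y = X$1 * Y$1 + X$2 * Y$2 - X$3 * Y$3"

definition epsL :: "3 \<Rightarrow> real" where
  "epsL k = gL (ebas k) (ebas k)"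

definition Jp :: "real^3 \<Rightarrow> real^3" where
  "Jp X = X$1 *\<^sub>R ebas 1 + X$2 *\<^sub>R ebas 2 - X$3 *\<^sub>R ebas 3"

text \<open>Levi-Civita connection on left-invariant fields, via the Koszul formula
  2 g(nabla_X Y, Z) = g([X,Y],Z) - g([Y,Z],X) + g([Z,X],Y), expanded in the
  orthonormal frame.\<close>
definition LC :: "real \<Rightarrow> real \<Rightarrow> real \<Rightarrow> real \<Rightarrow> real^3 \<Rightarrow> real^3 \<Rightarrow> real^3" where
  "LC m n u v X Y = (\<chi> k. epsL k * (1/2) *
      (gL (brk m n u v X Y) (ebas k) - gL (brk m n u v Y (ebas k)) X
       + gL (brk m n u v (ebas k) X) Y))"

definition nablaJ :: "real \<Rightarrow> real \<Rightarrow> real \<Rightarrow> real \<Rightarrow> real^3 \<Rightarrow> real^3 \<Rightarrow> real^3" where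
  "nablaJ m n u v X Y = LC m n u v X (Jp Y) - Jp (LC m n u v X Y)"

definition Yano :: "real \<Rightarrow> real \<Rightarrow> real \<Rightarrow> real \<Rightarrow> real^3 \<Rightarrow> real^3 \<Rightarrow> real^3" where
  "Yano m n u v X Y = LC m n u v X Y - (1/2) *\<^sub>R nablaJ m n u v Y (Jp X)
     - (1/4) *\<^sub>R (nablaJ m n u v X (Jp Y) - nablaJ m n u v (Jp X) Y)"

definition RY :: "real \<Rightarrow> real \<Rightarrow> real \<Rightarrow> real \<Rightarrow> real^3 \<Rightarrow> real^3 \<Rightarrow> real^3 \<Rightarrow> real^3" where
  "RY m n u v X Y Z = Yano m n u v X (Yano m n u v Y Z) - Yano m n u v Y (Yano m n u v X Z)
     - Yano m n u v (brk m n u v X Y) Z"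

definition RicY :: "real \<Rightarrow> real \<Rightarrow> real \<Rightarrow> real \<Rightarrow> real^3 \<Rightarrow> real^3 \<Rightarrow> real" where
  "RicY m n u v X Y = - gL (RY m n u v X (ebas 1) Y) (ebas 1)
     - gL (RY m n u v X (ebas 2) Y) (ebas 2) + gL (RY m n u v X (ebas 3) Y) (ebas 3)"

definition RicYsym :: "real \<Rightarrow> real \<Rightarrow> real \<Rightarrow> real \<Rightarrow> real^3 \<Rightarrow> real^3 \<Rightarrow> real" where
  "RicYsym m n u v X Y = (1/2) * (RicY m n u v X Y + RicY m n u v Y X)"

text \<open>Lie derivative of the symmetrized Ricci tensor along a left-invariant xi,
  evaluated on left-invariant X, Y.  The term xi(Ric(X,Y)) vanishes since
  Ric(X,Y) is a constant function on the group.\<close>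
definition LieRic :: "real \<Rightarrow> real \<Rightarrow> real \<Rightarrow> real \<Rightarrow> real^3 \<Rightarrow> real^3 \<Rightarrow> real^3 \<Rightarrow> real" where
  "LieRic m n u v xi X Y = 0 - RicYsym m n u v (brk m n u v xi X) Y
     - RicYsym m n u v X (brk m n u v xi Y)"

definition ricci_collineation :: "real \<Rightarrow> real \<Rightarrow> real \<Rightarrow> real \<Rightarrow> real^3 \<Rightarrow> bool" where
  "ricci_collineation m n u v xi \<longleftrightarrow> (\<forall>X Y. LieRic m n u v xi X Y = 0)"

end

theory Submission
  imports Defs
begin

text \<open>In the frame e1, e2, e3 the Ricci tensor of the Yano connection is diagonal and symmetric:
  Ric*(X,Y) = -(m^2 + n u) X1 Y1 - m^2 X2 Y2.  Brackets take values in span {e2, e3}, so the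
  Lie derivative of Ric* along xi only sees the e2 e2 entry and carries a factor m^2.
  Hence every xi is a collineation when m = 0, and otherwise exactly those with xi1 = 0 and
  m xi2 + u xi3 = 0.\<close>

lemma ebas_components [simp]:
  "ebas 1 $ 1 = 1" "ebas 1 $ 2 = 0" "ebas 1 $ 3 = 0"
  "ebas 2 $ 1 = 0" "ebas 2 $ 2 = 1" "ebas 2 $ 3 = 0"
  "ebas 3 $ 1 = 0" "ebas 3 $ 2 = 0" "ebas 3 $ 3 = 1"
  by (simp_all add: ebas_def axis_def)

lemma brk_components [simp]:
  "brk m n u v X Y $ 1 = 0"
  "brk m n u v X Y $ 2 = (X$1 * Y$2 - X$2 * Y$1) * m + (X$1 * Y$3 - X$3 * Y$1) * u"
  "brk m n u v X Y $ 3 = (X$1 * Y$2 - X$2 * Y$1) * n + (X$1 * Y$3 - X$3 * Y$1) * v"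
  by (simp_all add: brk_def)

lemma Jp_components [simp]: "Jp X $ 1 = X$1" "Jp X $ 2 = X$2" "Jp X $ 3 = - X$3"
  by (simp_all add: Jp_def)

lemma epsL_values [simp]: "epsL 1 = 1" "epsL 2 = 1" "epsL 3 = -1"
  by (simp_all add: epsL_def gL_def)

lemma LC_component [simp]:
  "LC m n u v X Y $ k = epsL k * (1/2) *
      (gL (brk m n u v X Y) (ebas k) - gL (brk m n u v Y (ebas k)) X
       + gL (brk m n u v (ebas k) X) Y)"
  by (simp add: LC_def)

lemma Yano_components [simp]:
  "Yano m n u v X Y $ 1 = m * X$2 * Y$2"
  "Yano m n u v X Y $ 2 = - m * X$2 * Y$1 - u * X$3 * Y$1"
  "Yano m n u v X Y $ 3 = n * X$1 * Y$2 - n * X$2 * Y$1 + v * X$1 * Y$3"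
  by (simp_all add: Yano_def nablaJ_def gL_def algebra_simps)

lemma RicY_eq:
  "RicY m n u v X Y = - (m\<^sup>2 + n * u) * X$1 * Y$1 - m\<^sup>2 * X$2 * Y$2"
  by (simp add: RicY_def RY_def gL_def algebra_simps power2_eq_square)

lemma RicYsym_eq_RicY: "RicYsym m n u v X Y = RicY m n u v X Y"
  by (simp add: RicYsym_def RicY_eq algebra_simps)

lemma LieRic_eq:
  "LieRic m n u v xi X Y = m\<^sup>2 * (2 * m * xi$1 * X$2 * Y$2 + u * xi$1 * (X$2 * Y$3 + X$3 * Y$2)
     - (m * xi$2 + u * xi$3) * (X$1 * Y$2 + X$2 * Y$1))"
  by (simp add: LieRic_def RicYsym_eq_RicY RicY_eq algebra_simps power2_eq_square)

lemma ricci_collineation_iff: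
  "ricci_collineation m n u v xi \<longleftrightarrow> m = 0 \<or> (xi$1 = 0 \<and> m * xi$2 + u * xi$3 = 0)"
proof
  assume "ricci_collineation m n u v xi"
  then have "LieRic m n u v xi (ebas 2) (ebas 2) = 0" "LieRic m n u v xi (ebas 1) (ebas 2) = 0"
    by (simp_all add: ricci_collineation_def)
  then have "m\<^sup>2 * (2 * m * xi$1) = 0" "m\<^sup>2 * (m * xi$2 + u * xi$3) = 0"
    by (simp_all add: LieRic_eq algebra_simps)
  then show "m = 0 \<or> (xi$1 = 0 \<and> m * xi$2 + u * xi$3 = 0)"
    by auto
next
  assume "m = 0 \<or> (xi$1 = 0 \<and> m * xi$2 + u * xi$3 = 0)"
  then show "ricci_collineation m n u v xi"
    by (auto simp: ricci_collineation_def LieRic_eq)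
qed

lemma solutions_eq_span:
  fixes m u :: real
  assumes "m \<noteq> 0"
  shows "{x :: real^3. x$1 = 0 \<and> m * x$2 + u * x$3 = 0} = span {(- u / m) *\<^sub>R ebas 2 + ebas 3}"
    (is "_ = span {?w}")
proof (intro set_eqI iffI)
  fix x :: "real^3"
  assume "x \<in> {x. x$1 = 0 \<and> m * x$2 + u * x$3 = 0}"
  then have "x = x$3 *\<^sub>R ?w"
    using assms by (auto simp: vec_eq_iff forall_3 field_simps)
  then show "x \<in> span {?w}"
    by (metis span_base span_mul singletonI)
next
  fix x :: "real^3"
  assume "x \<in> span {?w}"
  then obtain c where "x = c *\<^sub>R ?w"
    by (auto simp: span_singleton)
  then show "x \<in> {x. x$1 = 0 \<and> m * x$2 + u * x$3 = 0}"
    using assms by simp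
qed

theorem theorem4p6:
  fixes m n u v :: real
  assumes "m + v \<noteq> 0" and "m * u - n * v = 0"
  shows "(m = 0 \<longrightarrow> {xi. ricci_collineation m n u v xi} = UNIV)
       \<and> (m \<noteq> 0 \<longrightarrow>
            (\<forall>l1 l2 l3. ricci_collineation m n u v
                 (l1 *\<^sub>R ebas 1 + l2 *\<^sub>R ebas 2 + l3 *\<^sub>R ebas 3)
               \<longleftrightarrow> l1 = 0 \<and> m * l2 + u * l3 = 0)
          \<and> {xi. ricci_collineation m n u v xi} = span {(- u / m) *\<^sub>R ebas 2 + ebas 3})"
proof (intro conjI impI allI)
  assume "m = 0"
  then show "{xi. ricci_collineation m n u v xi} = UNIV"
    by (simp add: ricci_collineation_iff)
next
  fix l1 l2 l3 :: real
  assume "m \<noteq> 0"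
  then show "ricci_collineation m n u v (l1 *\<^sub>R ebas 1 + l2 *\<^sub>R ebas 2 + l3 *\<^sub>R ebas 3)
      \<longleftrightarrow> l1 = 0 \<and> m * l2 + u * l3 = 0"
    by (simp add: ricci_collineation_iff)
next
  assume "m \<noteq> 0"
  then show "{xi. ricci_collineation m n u v xi} = span {(- u / m) *\<^sub>R ebas 2 + ebas 3}"
    using solutions_eq_span[of m u] by (simp add: ricci_collineation_iff)
qed

end
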